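(* Let $\sigma,\hat\sigma\in\mathfrak S_j$ with $\mathrm{ides}(\sigma)=\mathrm{ides}(\hat\sigma)$, and let $\tau,\hat\tau\in\mathfrak S_k$ with $\mathrm{ides}(\tau)=\mathrm{ides}(\hat\tau)$. Then \[ \sum_{\mu \in \sigma \vartriangle \tau}t^{\mathrm{ides}(\mu)} =\sum_{\mu \in \hat{\sigma} \triangledown \hat{\tau}}t^{\mathrm{ides}(\mu)}. \]
   Context: $\mathfrak S_n$ is the set of permutations of $[n]$ written as words ($\mathfrak S_0=\{\text{empty word}\}$). $\mathrm{ides}(\mu)=\mathrm{des}(\mu^{-1})$, the number of descents of the inverse. For a word $\sigma'$ of $j$ distinct integers, $\sigma'\sim\sigma$ means that replacing the letters of $\sigma'$ order-preservingly by $1,\dots,j$ gives $\sigma$. For $\sigma\in\mathfrak S_j,\tau\in\mathfrak S_k$: $\sigma\vartriangle\tau=\{\mu=\sigma'1\tau'\in\mathfrak S_{j+k+1}:\sigma'\sim\sigma,\ \tau'\sim\tau,\ j+k+1\text{ is a letter of }\tau'\}$ and $\sigma\triangledown\tau=\{\mu=\sigma'1\tau'\in\mathfrak S_{j+k+1}:\sigma'\sim\sigma,\ \tau'\sim\tau,\ 2\text{ is a letter of }\tau'\}$. *)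

theory Defs
  imports "HOL-Computational_Algebra.Polynomial"
begin

definition perms :: "nat \<Rightarrow> nat list set" where
  "perms n = {w. distinct w \<and> set w = {1..n}}"

definition des :: "nat list \<Rightarrow> nat" where
  "des w = card {i. Suc i < length w \<and> w ! i > w ! Suc i}"

text \<open>Inverse of a permutation word: the value at v is the (1-based) position of v.\<close>
definition perm_inv :: "nat list \<Rightarrow> nat list" where
  "perm_inv w = map (\<lambda>v. Suc (LEAST i. i < length w \<and> w ! i = v)) [1..<Suc (length w)]"

definition ides :: "nat list \<Rightarrow> nat" where
  "ides w = des (perm_inv w)"

definition red_eq :: "nat list \<Rightarrow> nat list \<Rightarrow> bool" where
  "red_eq s' s \<longleftrightarrow> distinct s' \<and> length s' = length s \<and>
     (\<forall>i<length s. \<forall>j<length s. s' ! i < s' ! j \<longleftrightarrow> s ! i < s ! j)"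

definition tri_up :: "nat list \<Rightarrow> nat list \<Rightarrow> nat list set" where
  "tri_up s t = {\<mu> \<in> perms (length s + length t + 1). \<exists>s' t'.
      \<mu> = s' @ [1] @ t' \<and> red_eq s' s \<and> red_eq t' t \<and> length s + length t + 1 \<in> set t'}"

definition tri_down :: "nat list \<Rightarrow> nat list \<Rightarrow> nat list set" where
  "tri_down s t = {\<mu> \<in> perms (length s + length t + 1). \<exists>s' t'.
      \<mu> = s' @ [1] @ t' \<and> red_eq s' s \<and> red_eq t' t \<and> 2 \<in> set t'}"

end

theory Submission
  imports Defs "HOL-Combinatorics.Transposition"
begin

(*
  Write \<mu> = \<sigma>' 1 \<tau>' and let p be the word over {True, False} whose i-th letter says whether the
  value i + 2 lies in \<sigma>' or in \<tau>'. Then \<mu>\<inverse> is j + 1 followed by the interleaving of \<sigma>\<inverse> and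
  \<tau>\<inverse> + (j + 1) prescribed by p, so ides \<mu> depends only on p and on the descent sets D, E of
  \<sigma>\<inverse>, \<tau>\<inverse>: it is j - |A| + |D \<inter> A| + |E \<inter> B|, where A (resp. B) indexes the pairs of
  consecutive Trues (resp. Falses) that are adjacent in p. The condition j + k + 1 \<in> \<tau>' says that
  p ends with False, the condition 2 \<in> \<tau>' that p starts with False; reversing p exchanges the two
  and reflects A and B. On words starting with False, exchanging an empty gap between two Trues
  with a non-empty neighbouring gap is an involution that moves one element of A by one place and
  keeps B, so the generating function is invariant under adjacent transpositions of D, and likewise
  of E. Hence it depends only on |D| = ides \<sigma> and |E| = ides \<tau>.
*)

(* i \<in> adjacent_occs c p iff the i-th and the (i+1)-st occurrence of c in p (counting from 0)
   are neighbours in p. *)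
primrec adjacent_occs :: "'a \<Rightarrow> 'a list \<Rightarrow> nat set" where
  "adjacent_occs c [] = {}"
| "adjacent_occs c (x # p) =
     (if x = c \<and> p \<noteq> [] \<and> hd p = c then {0} else {}) \<union>
     (if x = c then Suc ` adjacent_occs c p else adjacent_occs c p)"

lemma adjacent_occs_less_count: "i \<in> adjacent_occs c p \<Longrightarrow> Suc i < count_list p c"
proof (induction p arbitrary: i)
  case (Cons x p)
  show ?case
  proof (cases "x = c")
    case True
    then consider "i = 0" "p \<noteq> []" "hd p = c" | i' where "i = Suc i'" "i' \<in> adjacent_occs c p"
      using Cons.prems by (auto split: if_splits)
    then show ?thesis
    proof cases
      case 1
      then show ?thesis using True by (cases p) auto
    next
      case 2
      then show ?thesis using True Cons.IH by auto
    qed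
  next
    case False
    then show ?thesis using Cons by auto
  qed
qed simp

lemma finite_adjacent_occs [simp]: "finite (adjacent_occs c p)"
  by (rule finite_subset[of _ "{..<count_list p c}"]) (auto dest: adjacent_occs_less_count)

lemma count_list_pos_if_last: "xs \<noteq> [] \<Longrightarrow> last xs = c \<Longrightarrow> count_list xs c \<ge> 1"
  by (induction xs) auto

lemma adjacent_occs_append:
  "adjacent_occs c (xs @ ys) = adjacent_occs c xs \<union> (\<lambda>i. i + count_list xs c) ` adjacent_occs c ys \<union>
     (if xs \<noteq> [] \<and> ys \<noteq> [] \<and> last xs = c \<and> hd ys = c then {count_list xs c - 1} else {})"
proof (induction xs)
  case (Cons x xs)
  then show ?case
    using count_list_pos_if_last[of xs c]
    by (cases "xs = []") (auto simp: image_Un image_image)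
qed simp

lemma adjacent_occs_rev:
  "adjacent_occs c (rev p) = (\<lambda>i. count_list p c - 2 - i) ` adjacent_occs c p"
proof (induction p)
  case (Cons x p)
  have "Suc (count_list p c) - 2 - Suc i = count_list p c - 2 - i" if "i \<in> adjacent_occs c p" for i
    using adjacent_occs_less_count[OF that] by simp
  then show ?case
    using Cons.IH by (auto simp: adjacent_occs_append last_rev image_Un image_image)
qed simp

fun rises :: "bool list \<Rightarrow> nat" where
  "rises (x # y # zs) = (if \<not> x \<and> y then 1 else 0) + rises (y # zs)"
| "rises _ = 0"

lemma rises_Cons: "rises (x # p) = (if p \<noteq> [] \<and> \<not> x \<and> hd p then 1 else 0) + rises p"
  by (cases p) simp_all

lemma card_insert_zero_Suc_image:
  "finite A \<Longrightarrow> card ((if P then {0} else {}) \<union> Suc ` A) = (if P then 1 else 0) + card A"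
  by (auto simp: card_image)

(* A maximal block of Trues starts at the head of p or right after a rise, and a block of
   length l contains l - 1 adjacent pairs. *)
lemma count_True_eq_rises_adjacent_occs:
  "count_list p True = (if p \<noteq> [] \<and> hd p then 1 else 0) + rises p + card (adjacent_occs True p)"
proof (induction p rule: rises.induct)
  case (1 x y zs)
  then show ?case by (cases x) (simp_all add: card_insert_zero_Suc_image)
qed simp_all

definition descents :: "'a::linorder list \<Rightarrow> nat set" where
  "descents w = {i. Suc i < length w \<and> w ! i > w ! Suc i}"

lemma des_eq_card_descents: "des w = card (descents w)"
  by (simp add: des_def descents_def)

lemma finite_descents [simp]: "finite (descents w)"
  by (rule finite_subset[of _ "{..<length w}"]) (auto simp: descents_def)

lemma descents_Cons:
  "descents (x # w) = (if w \<noteq> [] \<and> hd w < x then {0} else {}) \<union> Suc ` descents w"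
proof (rule set_eqI)
  fix i
  show "i \<in> descents (x # w) \<longleftrightarrow> i \<in> (if w \<noteq> [] \<and> hd w < x then {0} else {}) \<union> Suc ` descents w"
    by (cases i; cases w) (auto simp: descents_def)
qed

lemma descents_map_add: "descents (map ((+) (c::nat)) w) = descents w"
  by (auto simp: descents_def)

fun interleave :: "bool list \<Rightarrow> 'a list \<Rightarrow> 'a list \<Rightarrow> 'a list" where
  "interleave [] u w = []"
| "interleave (True # p) u w = hd u # interleave p (tl u) w"
| "interleave (False # p) u w = hd w # interleave p u (tl w)"

lemma length_interleave [simp]: "length (interleave p u w) = length p"
  by (induction p u w rule: interleave.induct) auto

lemma interleave_eq_Nil_iff [simp]: "interleave p u w = [] \<longleftrightarrow> p = []"
  by (metis length_interleave length_0_conv)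

lemma nth_interleave:
  assumes "length u = count_list p True" "length w = count_list p False" "i < length p"
  shows "interleave p u w ! i =
    (if p ! i then u ! count_list (take i p) True else w ! count_list (take i p) False)"
  using assms
proof (induction p u w arbitrary: i rule: interleave.induct)
  case (2 p u w)
  then show ?case by (cases u; cases i) auto
next
  case (3 p u w)
  then show ?case by (cases w; cases i) auto
qed simp

lemma hd_interleave:
  "p \<noteq> [] \<Longrightarrow> hd (interleave p u w) = (if hd p then hd u else hd w)"
  by (cases p; cases "hd p") auto

lemma count_list_hd_pos: "p \<noteq> [] \<Longrightarrow> count_list p (hd p) \<noteq> 0"
  by (cases p) auto

context
  fixes p :: "bool list" and u w :: "'a::linorder list"
  assumes lengths: "length u = count_list p True" "length w = count_list p False"
begin

lemma descents_Cons_interleave_below: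
  assumes "\<forall>y\<in>set w. a < y"
  shows "descents (a # interleave p u w) =
    (if p \<noteq> [] \<and> hd p \<and> hd u < a then {0} else {}) \<union> Suc ` descents (interleave p u w)"
proof -
  have "(p \<noteq> [] \<and> hd (interleave p u w) < a) = (p \<noteq> [] \<and> hd p \<and> hd u < a)"
  proof (cases "p \<noteq> [] \<and> \<not> hd p")
    case True
    then have "w \<noteq> []" using lengths count_list_hd_pos[of p] by auto
    then have "a < hd w" using assms by simp
    then show ?thesis using True by (auto simp: hd_interleave)
  qed (auto simp: hd_interleave)
  then show ?thesis by (simp add: descents_Cons)
qed

lemma descents_Cons_interleave_above:
  assumes "\<forall>x\<in>set u. x < a"
  shows "descents (a # interleave p u w) =
    (if p \<noteq> [] \<and> (hd p \<or> hd w < a) then {0} else {}) \<union> Suc ` descents (interleave p u w)"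
proof -
  have "(p \<noteq> [] \<and> hd (interleave p u w) < a) = (p \<noteq> [] \<and> (hd p \<or> hd w < a))"
  proof (cases "p \<noteq> [] \<and> hd p")
    case True
    then have "u \<noteq> []" using lengths count_list_hd_pos[of p] by auto
    then have "hd u < a" using assms by simp
    then show ?thesis using True by (auto simp: hd_interleave)
  qed (auto simp: hd_interleave)
  then show ?thesis by (simp add: descents_Cons)
qed

end

(* A descent of the interleaving sits at a factor False True, or inside a factor True True
   (False False), where it is a descent of u (w) at an adjacent pair of occurrences. *)
lemma card_descents_interleave:
  assumes "length u = count_list p True" "length w = count_list p False"
    and "\<forall>x\<in>set u. \<forall>y\<in>set w. x < y"
  shows "card (descents (interleave p u w)) =
    rises p + card (descents u \<inter> adjacent_occs True p) + card (descents w \<inter> adjacent_occs False p)"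
  using assms
proof (induction p arbitrary: u w)
  case Nil
  then show ?case by (simp add: descents_def)
next
  case (Cons b p)
  show ?case
  proof (cases b)
    case True
    then obtain a u' where u: "u = a # u'" using Cons.prems by (cases u) auto
    have lengths: "length u' = count_list p True" "length w = count_list p False"
      using Cons.prems u True by auto
    have "descents u \<inter> adjacent_occs True (b # p) =
        (if p \<noteq> [] \<and> hd p \<and> hd u' < a then {0} else {}) \<union> Suc ` (descents u' \<inter> adjacent_occs True p)"
      using True lengths count_list_hd_pos[of p] by (auto simp: u descents_Cons)
    then show ?thesis
      using Cons.IH[OF lengths] Cons.prems True
      by (simp add: u descents_Cons_interleave_below[OF lengths] rises_Cons card_insert_zero_Suc_image)
  next
    case False
    then obtain a w' where w: "w = a # w'" using Cons.prems by (cases w) auto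
    have lengths: "length u = count_list p True" "length w' = count_list p False"
      using Cons.prems w False by auto
    have "descents w \<inter> adjacent_occs False (b # p) =
        (if p \<noteq> [] \<and> \<not> hd p \<and> hd w' < a then {0} else {}) \<union> Suc ` (descents w' \<inter> adjacent_occs False p)"
      using False lengths count_list_hd_pos[of p] by (auto simp: w descents_Cons)
    moreover have "card ((if p \<noteq> [] \<and> (hd p \<or> hd w' < a) then {0} else {}) \<union> Suc ` descents (interleave p u w'))
        = (if p \<noteq> [] \<and> hd p then 1 else 0) + (if p \<noteq> [] \<and> \<not> hd p \<and> hd w' < a then 1 else 0)
          + card (descents (interleave p u w'))"
      by (simp add: card_insert_zero_Suc_image)
    ultimately show ?thesis
      using Cons.IH[OF lengths] Cons.prems False
      by (simp add: w descents_Cons_interleave_above[OF lengths] rises_Cons card_insert_zero_Suc_image)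
  qed
qed

(* of_gaps c d [g\<^sub>0, \<dots>, g\<^sub>m] = d^g\<^sub>0 c d^g\<^sub>1 c \<dots> c d^g\<^sub>m, and gaps c inverts it on words
   over {c, d}. *)
fun of_gaps :: "'a \<Rightarrow> 'a \<Rightarrow> nat list \<Rightarrow> 'a list" where
  "of_gaps c d [] = []"
| "of_gaps c d [g] = replicate g d"
| "of_gaps c d (g # h # gs) = replicate g d @ c # of_gaps c d (h # gs)"

fun gaps :: "'a \<Rightarrow> 'a list \<Rightarrow> nat list" where
  "gaps c [] = [0]"
| "gaps c (x # p) =
     (if x = c then 0 # gaps c p else (case gaps c p of g # gs \<Rightarrow> Suc g # gs | [] \<Rightarrow> []))"

lemma gaps_not_Nil [simp]: "gaps c p \<noteq> []"
  by (induction p) (auto split: list.split)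

lemma length_gaps: "length (gaps c p) = Suc (count_list p c)"
  by (induction p) (use gaps_not_Nil in \<open>auto split: list.split\<close>)

lemma sum_list_gaps: "set p \<subseteq> {c, d} \<Longrightarrow> c \<noteq> d \<Longrightarrow> sum_list (gaps c p) = count_list p d"
  by (induction p) (use gaps_not_Nil in \<open>auto split: list.split\<close>)

lemma of_gaps_Cons_Suc: "of_gaps c d (Suc g # gs) = d # of_gaps c d (g # gs)"
  by (cases gs) auto

lemma of_gaps_gaps: "set p \<subseteq> {c, d} \<Longrightarrow> c \<noteq> d \<Longrightarrow> of_gaps c d (gaps c p) = p"
proof (induction p)
  case (Cons x p)
  obtain g gs where "gaps c p = g # gs"
    using gaps_not_Nil[of c p] by (cases "gaps c p") auto
  with Cons show ?case
    by (cases "x = c") (auto simp: of_gaps_Cons_Suc)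
qed simp

lemma gaps_replicate_append:
  "c \<noteq> d \<Longrightarrow> gaps c (replicate n d @ xs) = (case gaps c xs of g # gs \<Rightarrow> (g + n) # gs | [] \<Rightarrow> [])"
  by (induction n) (auto split: list.split)

lemma gaps_of_gaps: "g \<noteq> [] \<Longrightarrow> c \<noteq> d \<Longrightarrow> gaps c (of_gaps c d g) = g"
proof (induction c d g rule: of_gaps.induct)
  case (2 c d g)
  then show ?case using gaps_replicate_append[of c d g "[]"] by simp
next
  case (3 c d g h gs)
  then show ?case using gaps_replicate_append[of c d g "c # of_gaps c d (h # gs)"] by simp
qed simp

lemma count_list_replicate: "count_list (replicate n d) c = (if c = d then n else 0)"
  by (induction n) auto

lemma set_of_gaps: "set (of_gaps c d g) \<subseteq> {c, d}"
  by (induction c d g rule: of_gaps.induct) auto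

lemma count_list_of_gaps:
  assumes "c \<noteq> d"
  shows "count_list (of_gaps c d g) c = length g - 1" "count_list (of_gaps c d g) d = sum_list g"
  using assms by (induction c d g rule: of_gaps.induct) (auto simp: count_list_replicate)

lemma adjacent_occs_replicate: "c \<noteq> d \<Longrightarrow> adjacent_occs c (replicate n d) = {}"
  by (induction n) auto

lemma adjacent_occs_replicate_append:
  "c \<noteq> d \<Longrightarrow> adjacent_occs c (replicate n d @ c # p) = adjacent_occs c (c # p)"
  by (induction n) auto

lemma adjacent_occs_append_other:
  "c \<noteq> d \<Longrightarrow> adjacent_occs d (xs @ c # ys) = adjacent_occs d xs \<union> (\<lambda>i. i + count_list xs d) ` adjacent_occs d ys"
  by (cases ys) (auto simp: adjacent_occs_append)

lemma hd_of_gaps: "gs \<noteq> [] \<Longrightarrow> hd (of_gaps c d (h # gs)) = (if h = 0 then c else d)"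
  by (cases h; cases gs) auto

lemma adjacent_occs_of_gaps:
  "c \<noteq> d \<Longrightarrow> adjacent_occs c (of_gaps c d g) = {i. Suc i < length g - 1 \<and> g ! Suc i = 0}"
proof (induction c d g rule: of_gaps.induct)
  case (2 c d g)
  then show ?case by (simp add: adjacent_occs_replicate)
next
  case (3 c d g h gs)
  have "adjacent_occs c (c # of_gaps c d (h # gs)) =
      (if gs \<noteq> [] \<and> h = 0 then {0} else {}) \<union> Suc ` adjacent_occs c (of_gaps c d (h # gs))"
  proof (cases "gs = []")
    case True
    then show ?thesis using 3(2) by (cases h) (simp_all add: adjacent_occs_replicate)
  next
    case False
    then have "of_gaps c d (h # gs) \<noteq> []" by (cases gs) auto
    then show ?thesis using False 3(2) by (simp add: hd_of_gaps)
  qed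
  moreover have "(if gs \<noteq> [] \<and> h = 0 then {0} else {}) \<union>
      Suc ` {i. Suc i < length (h # gs) - 1 \<and> (h # gs) ! Suc i = 0} =
      {i. Suc i < length (g # h # gs) - 1 \<and> (g # h # gs) ! Suc i = 0}"
    (is "?l = ?r")
  proof (rule set_eqI)
    fix i
    show "i \<in> ?l \<longleftrightarrow> i \<in> ?r" by (cases i) (auto simp: image_iff)
  qed
  ultimately show ?case
    using 3 by (simp add: adjacent_occs_replicate_append)
qed simp

abbreviation adj_swap :: "nat \<Rightarrow> nat \<Rightarrow> nat" where
  "adj_swap i \<equiv> Transposition.transpose i (Suc i)"

lemma adj_swap_Suc: "adj_swap (Suc i) (Suc x) = Suc (adj_swap i x)"
  by (auto simp: transpose_def)

(* Exchanging an empty gap with a non-empty neighbour moves one adjacency of c's by one place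
   and leaves the blocks of d's intact. *)
definition swap_gaps :: "nat \<Rightarrow> nat list \<Rightarrow> nat list" where
  "swap_gaps r g =
     (if (g ! r = 0) \<noteq> (g ! Suc r = 0) then g[r := g ! Suc r, Suc r := g ! r] else g)"

lemma length_swap_gaps [simp]: "length (swap_gaps r g) = length g"
  by (simp add: swap_gaps_def)

lemma swap_gaps_swap_gaps: "Suc r < length g \<Longrightarrow> swap_gaps r (swap_gaps r g) = g"
  by (auto simp: swap_gaps_def nth_list_update list_update_swap list_update_overwrite)

lemma sum_list_swap_gaps: "Suc r < length g \<Longrightarrow> sum_list (swap_gaps r g) = sum_list g"
  using mset_swap[of "Suc r" g r] by (simp add: swap_gaps_def flip: sum_mset_sum_list)

lemma swap_gaps_nth_eq_0:
  "Suc r < length g \<Longrightarrow> x < length g \<Longrightarrow> (swap_gaps r g ! x = 0) = (g ! adj_swap r x = 0)"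
  by (auto simp: swap_gaps_def transpose_def nth_list_update)

lemma adjacent_occs_of_gaps_swap_gaps:
  assumes "c \<noteq> d" "Suc (Suc i) < length g - 1"
  shows "adjacent_occs c (of_gaps c d (swap_gaps (Suc i) g)) = adj_swap i ` adjacent_occs c (of_gaps c d g)"
  unfolding adjacent_occs_of_gaps[OF assms(1)] length_swap_gaps
proof (rule set_eqI)
  fix x
  have "Suc (adj_swap i x) < length g - 1 \<longleftrightarrow> Suc x < length g - 1"
    using assms by (auto simp: transpose_def)
  then show "x \<in> {x. Suc x < length g - 1 \<and> swap_gaps (Suc i) g ! Suc x = 0} \<longleftrightarrow>
      x \<in> adj_swap i ` {x. Suc x < length g - 1 \<and> g ! Suc x = 0}"
    using assms swap_gaps_nth_eq_0[of "Suc i" g "Suc x"]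
    by (auto simp: in_transpose_image_iff adj_swap_Suc)
qed

lemma of_gaps_append:
  "xs \<noteq> [] \<Longrightarrow> ys \<noteq> [] \<Longrightarrow> of_gaps c d (xs @ ys) = of_gaps c d xs @ c # of_gaps c d ys"
proof (induction xs)
  case (Cons x xs)
  then show ?case by (cases xs; cases ys) auto
qed simp

lemma of_gaps_swap_gaps_other:
  assumes "c \<noteq> d" "1 \<le> r" "Suc r < length g - 1"
  shows "adjacent_occs d (of_gaps c d (swap_gaps r g)) = adjacent_occs d (of_gaps c d g)"
    and "hd (of_gaps c d (swap_gaps r g)) = hd (of_gaps c d g)"
proof -
  define X where "X = take r g"
  define Z where "Z = drop (Suc (Suc r)) g"
  define a where "a = g ! r"
  define b where "b = g ! Suc r"
  have "X \<noteq> []" "Z \<noteq> []" "length X = r"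
    using assms by (auto simp: X_def Z_def)
  have g: "g = X @ a # b # Z"
    unfolding X_def Z_def a_def b_def using assms
    by (metis Cons_nth_drop_Suc Suc_lessD append_take_drop_id diff_le_self order_less_le_trans)
  have split: "of_gaps c d (X @ a' # b' # Z) =
      of_gaps c d X @ c # replicate a' d @ c # replicate b' d @ c # of_gaps c d Z" for a' b'
    using of_gaps_append[OF \<open>X \<noteq> []\<close>, of "a' # b' # Z" c d] \<open>Z \<noteq> []\<close> by (cases Z) auto
  have "adjacent_occs d (of_gaps c d (swap_gaps r g)) = adjacent_occs d (of_gaps c d g) \<and>
      hd (of_gaps c d (swap_gaps r g)) = hd (of_gaps c d g)"
  proof (cases "(a = 0) \<noteq> (b = 0)")
    case True
    have "g[r := b, Suc r := a] = X @ b # a # Z"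
      by (subst g) (simp add: list_update_append \<open>length X = r\<close>)
    then have "swap_gaps r g = X @ b # a # Z"
      using True by (simp add: swap_gaps_def flip: a_def b_def)
    then show ?thesis
      using True assms(1) \<open>X \<noteq> []\<close> split g
      by (auto simp: adjacent_occs_append_other image_Un image_image hd_append)
  qed (simp add: swap_gaps_def flip: a_def b_def)
  then show "adjacent_occs d (of_gaps c d (swap_gaps r g)) = adjacent_occs d (of_gaps c d g)"
    and "hd (of_gaps c d (swap_gaps r g)) = hd (of_gaps c d g)" by simp_all
qed

lemma sum_adjacent_occs_adj_swap:
  fixes h :: "nat set \<Rightarrow> nat set \<Rightarrow> 'b::comm_monoid_add" and c d e :: 'a and k m :: nat
  assumes cd: "c \<noteq> d" and i: "Suc (Suc i) < m"
  defines "S \<equiv> {p. set p \<subseteq> {c, d} \<and> count_list p c = m \<and> count_list p d = k \<and> p \<noteq> [] \<and> hd p = e}"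
  shows "(\<Sum>p\<in>S. h (adj_swap i ` adjacent_occs c p) (adjacent_occs d p)) =
         (\<Sum>p\<in>S. h (adjacent_occs c p) (adjacent_occs d p))"
proof -
  define \<phi> where "\<phi> p = of_gaps c d (swap_gaps (Suc i) (gaps c p))" for p
  have \<phi>: "\<phi> p \<in> S \<and> \<phi> (\<phi> p) = p \<and> adjacent_occs c (\<phi> p) = adj_swap i ` adjacent_occs c p \<and>
      adjacent_occs d (\<phi> p) = adjacent_occs d p" if "p \<in> S" for p
  proof -
    define g where "g = gaps c p"
    have g: "length g = Suc m" "sum_list g = k" "of_gaps c d g = p"
      using \<open>p \<in> S\<close> cd by (auto simp: S_def g_def length_gaps sum_list_gaps of_gaps_gaps)
    have r: "Suc (Suc i) < length g - 1" "Suc (Suc i) < length g"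
      using g i by simp_all
    have "gaps c (\<phi> p) = swap_gaps (Suc i) g"
      using g gaps_of_gaps[OF _ cd, of "swap_gaps (Suc i) g"]
      by (auto simp: \<phi>_def g_def[symmetric] simp flip: length_0_conv)
    then have "\<phi> (\<phi> p) = p"
      using swap_gaps_swap_gaps[OF r(2)] g by (simp add: \<phi>_def)
    moreover have "count_list (\<phi> p) c = m" "count_list (\<phi> p) d = k"
      using count_list_of_gaps[OF cd] sum_list_swap_gaps[OF r(2)] g by (simp_all add: \<phi>_def g_def)
    moreover have "\<phi> p \<noteq> []"
      using \<open>count_list (\<phi> p) c = m\<close> i by auto
    moreover have "adjacent_occs d (\<phi> p) = adjacent_occs d p" "hd (\<phi> p) = hd p"
      using of_gaps_swap_gaps_other[OF cd _ r(1)] g by (simp_all add: \<phi>_def g_def)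
    moreover have "adjacent_occs c (\<phi> p) = adj_swap i ` adjacent_occs c p"
      using adjacent_occs_of_gaps_swap_gaps[OF cd r(1)] g by (simp add: \<phi>_def g_def)
    moreover have "set (\<phi> p) \<subseteq> {c, d}"
      by (simp add: \<phi>_def set_of_gaps)
    ultimately show ?thesis
      using \<open>p \<in> S\<close> by (simp add: S_def)
  qed
  show ?thesis
    by (rule sum.reindex_bij_witness[of S \<phi> \<phi>]) (use \<phi> in auto)
qed

lemma downward_closed_eq_lessThan_card:
  fixes D :: "nat set"
  assumes "finite D" and closed: "\<And>x. x \<in> D \<Longrightarrow> x - 1 \<in> D"
  shows "D = {..<card D}"
proof (cases "D = {}")
  case False
  have down: "y \<in> D" if "x \<in> D" "y \<le> x" for x y
    using that
  proof (induction x arbitrary: y)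
    case (Suc x)
    then show ?case using closed[of "Suc x"] by (auto simp: le_Suc_eq)
  qed simp
  moreover have "Max D \<in> D"
    using False assms(1) by simp
  ultimately have "D = {..Max D}"
    using assms(1) by (auto intro: Max_ge)
  then show ?thesis
    by (metis card_atMost lessThan_Suc_atMost)
qed simp

(* Shifting an element x with x - 1 \<notin> D down to x - 1 lowers \<Sum>D; when no such shift is possible,
   D is the initial segment {..<card D}. *)
lemma adj_swap_invariant_card_eq:
  fixes F :: "nat set \<Rightarrow> 'b"
  assumes inv: "\<And>D i. D \<subseteq> {..<n} \<Longrightarrow> Suc i < n \<Longrightarrow> F (adj_swap i ` D) = F D"
    and "D \<subseteq> {..<n}" "D' \<subseteq> {..<n}" "card D = card D'"
  shows "F D = F D'"
proof -
  have initial: "F D = F {..<card D}" if "D \<subseteq> {..<n}" for D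
    using that
  proof (induction "\<Sum>D" arbitrary: D rule: less_induct)
    case less
    have "finite D" using less.prems finite_subset by blast
    show ?case
    proof (cases "\<forall>x\<in>D. x - 1 \<in> D")
      case True
      then show ?thesis using downward_closed_eq_lessThan_card[OF \<open>finite D\<close>] by metis
    next
      case False
      then obtain x where "x \<in> D" "x - 1 \<notin> D" by blast
      then obtain i where i: "Suc i \<in> D" "i \<notin> D" by (cases x) auto
      have moved: "adj_swap i ` D = insert i (D - {Suc i})"
        using i by (auto simp: in_transpose_image_iff transpose_def)
      have "Suc i < n" using i less.prems by auto
      have "Suc i \<le> \<Sum>D" using member_le_sum[of "Suc i" D id] i \<open>finite D\<close> by simp
      then have "\<Sum>(adj_swap i ` D) < \<Sum>D"
        unfolding moved using i \<open>finite D\<close> by (simp add: sum_diff1_nat)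
      moreover have "adj_swap i ` D \<subseteq> {..<n}"
        unfolding moved using less.prems \<open>Suc i < n\<close> by auto
      ultimately have "F (adj_swap i ` D) = F {..<card (adj_swap i ` D)}"
        by (rule less.hyps)
      then show ?thesis
        using inv[OF less.prems \<open>Suc i < n\<close>] by (simp add: card_image)
    qed
  qed
  show ?thesis
    using initial[OF assms(2)] initial[OF assms(3)] assms(4) by simp
qed

lemma card_Int_image_involution:
  assumes inv: "\<And>x. x \<in> R \<Longrightarrow> f x \<in> R \<and> f (f x) = x" and "D \<subseteq> R" "A \<subseteq> R"
  shows "card (D \<inter> f ` A) = card (f ` D \<inter> A)"
proof -
  have image: "f ` (D \<inter> f ` A) = f ` D \<inter> A"
  proof
    show "f ` (D \<inter> f ` A) \<subseteq> f ` D \<inter> A"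
    proof
      fix y
      assume "y \<in> f ` (D \<inter> f ` A)"
      then obtain a where "a \<in> A" "f a \<in> D" "y = f (f a)" by auto
      moreover from this have "f (f a) = a" using inv[of a] assms(3) by blast
      ultimately show "y \<in> f ` D \<inter> A" by (metis IntI imageI)
    qed
    show "f ` D \<inter> A \<subseteq> f ` (D \<inter> f ` A)"
    proof
      fix y
      assume "y \<in> f ` D \<inter> A"
      then obtain x where "x \<in> D" "y = f x" "y \<in> A" by auto
      moreover from this have "f y = x" using inv[of x] assms(2) by blast
      ultimately show "y \<in> f ` (D \<inter> f ` A)" by (metis IntI imageI)
    qed
  qed
  have "inj_on f (D \<inter> f ` A)"
  proof (rule inj_onI)
    fix x y
    assume "x \<in> D \<inter> f ` A" "y \<in> D \<inter> f ` A" "f x = f y"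
    then show "x = y" using inv[of x] inv[of y] assms(2) by (metis IntD1 subsetD)
  qed
  from card_image[OF this] show ?thesis
    unfolding image by simp
qed

lemma reflect_involution: "(x::nat) \<in> {..<n - 1} \<Longrightarrow> n - 2 - x \<in> {..<n - 1} \<and> n - 2 - (n - 2 - x) = x"
  by auto

lemma inj_on_reflect: "inj_on (\<lambda>x::nat. n - 2 - x) {..<n - 1}"
  by (auto simp: inj_on_def)

lemma adjacent_occs_subset: "adjacent_occs c p \<subseteq> {..<count_list p c - 1}"
  using adjacent_occs_less_count by fastforce

definition bool_words :: "nat \<Rightarrow> nat \<Rightarrow> bool list set" where
  "bool_words j k = {p. count_list p True = j \<and> count_list p False = k}"

(* The number of inverse descents of \<sigma>' 1 \<tau>' with pattern p, where D and E are the descent sets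
   of \<sigma>\<inverse> and \<tau>\<inverse> (see ides_split). *)
definition des_weight :: "nat \<Rightarrow> nat set \<Rightarrow> nat set \<Rightarrow> bool list \<Rightarrow> nat" where
  "des_weight j D E p =
     j - card (adjacent_occs True p) + card (D \<inter> adjacent_occs True p) + card (E \<inter> adjacent_occs False p)"

lemma sum_starts_False_adj_swap_fst:
  assumes "Suc i < j - 1"
  shows "(\<Sum>p\<in>{p \<in> bool_words j k. p \<noteq> [] \<and> \<not> hd p}. f (des_weight j (adj_swap i ` D) E p)) =
         (\<Sum>p\<in>{p \<in> bool_words j k. p \<noteq> [] \<and> \<not> hd p}. f (des_weight j D E p))"
proof -
  define h where "h A B = f (j - card A + card (adj_swap i ` D \<inter> A) + card (E \<inter> B))" for A B
  let ?S = "{p \<in> bool_words j k. p \<noteq> [] \<and> \<not> hd p}"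
  have S: "?S = {p. set p \<subseteq> {True, False} \<and>
      count_list p True = j \<and> count_list p False = k \<and> p \<noteq> [] \<and> hd p = False}"
    by (auto simp: bool_words_def)
  have "(\<Sum>p\<in>?S. f (des_weight j D E p)) =
      (\<Sum>p\<in>?S. h (adj_swap i ` adjacent_occs True p) (adjacent_occs False p))"
    by (simp add: h_def des_weight_def card_image flip: image_Int[OF inj_transpose])
  also have "\<dots> = (\<Sum>p\<in>?S. h (adjacent_occs True p) (adjacent_occs False p))"
    unfolding S using assms
    by (intro sum_adjacent_occs_adj_swap[where c = True and d = False and m = j and h = h]) simp_all
  also have "\<dots> = (\<Sum>p\<in>?S. f (des_weight j (adj_swap i ` D) E p))"
    by (simp add: h_def des_weight_def)
  finally show ?thesis ..
qed

lemma sum_starts_False_adj_swap_snd: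
  assumes "Suc i < k - 1"
  shows "(\<Sum>p\<in>{p \<in> bool_words j k. p \<noteq> [] \<and> \<not> hd p}. f (des_weight j D (adj_swap i ` E) p)) =
         (\<Sum>p\<in>{p \<in> bool_words j k. p \<noteq> [] \<and> \<not> hd p}. f (des_weight j D E p))"
proof -
  define h where "h B A = f (j - card A + card (D \<inter> A) + card (adj_swap i ` E \<inter> B))" for A B
  let ?S = "{p \<in> bool_words j k. p \<noteq> [] \<and> \<not> hd p}"
  have S: "?S = {p. set p \<subseteq> {False, True} \<and>
      count_list p False = k \<and> count_list p True = j \<and> p \<noteq> [] \<and> hd p = False}"
    by (auto simp: bool_words_def)
  have "(\<Sum>p\<in>?S. f (des_weight j D E p)) =
      (\<Sum>p\<in>?S. h (adj_swap i ` adjacent_occs False p) (adjacent_occs True p))"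
    by (simp add: h_def des_weight_def card_image flip: image_Int[OF inj_transpose])
  also have "\<dots> = (\<Sum>p\<in>?S. h (adjacent_occs False p) (adjacent_occs True p))"
    unfolding S using assms
    by (intro sum_adjacent_occs_adj_swap[where c = False and d = True and m = k and h = h]) simp_all
  also have "\<dots> = (\<Sum>p\<in>?S. f (des_weight j D (adj_swap i ` E) p))"
    by (simp add: h_def des_weight_def)
  finally show ?thesis ..
qed

lemma sum_starts_False_card_eq:
  assumes "D \<subseteq> {..<j - 1}" "D' \<subseteq> {..<j - 1}" "card D = card D'"
    and "E \<subseteq> {..<k - 1}" "E' \<subseteq> {..<k - 1}" "card E = card E'"
  shows "(\<Sum>p\<in>{p \<in> bool_words j k. p \<noteq> [] \<and> \<not> hd p}. f (des_weight j D E p)) =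
         (\<Sum>p\<in>{p \<in> bool_words j k. p \<noteq> [] \<and> \<not> hd p}. f (des_weight j D' E' p))"
proof -
  let ?S = "{p \<in> bool_words j k. p \<noteq> [] \<and> \<not> hd p}"
  have "(\<Sum>p\<in>?S. f (des_weight j D E p)) = (\<Sum>p\<in>?S. f (des_weight j D' E p))"
    by (rule adj_swap_invariant_card_eq[where F = "\<lambda>D. \<Sum>p\<in>?S. f (des_weight j D E p)" and n = "j - 1",
          OF sum_starts_False_adj_swap_fst assms(1-3)])
  also have "\<dots> = (\<Sum>p\<in>?S. f (des_weight j D' E' p))"
    by (rule adj_swap_invariant_card_eq[where F = "\<lambda>E. \<Sum>p\<in>?S. f (des_weight j D' E p)" and n = "k - 1",
          OF sum_starts_False_adj_swap_snd assms(4-6)])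
  finally show ?thesis .
qed

lemma sum_starts_False_reflect_eq_ends_False:
  assumes D: "D \<subseteq> {..<j - 1}" and E: "E \<subseteq> {..<k - 1}"
  shows "(\<Sum>p\<in>{p \<in> bool_words j k. p \<noteq> [] \<and> \<not> hd p}.
            f (des_weight j ((\<lambda>i. j - 2 - i) ` D) ((\<lambda>i. k - 2 - i) ` E) p)) =
         (\<Sum>p\<in>{p \<in> bool_words j k. p \<noteq> [] \<and> \<not> last p}. f (des_weight j D E p))"
proof (rule sum.reindex_bij_witness[where i = rev and j = rev])
  fix p
  assume "p \<in> {p \<in> bool_words j k. p \<noteq> [] \<and> \<not> hd p}"
  then have counts: "count_list p True = j" "count_list p False = k"
    by (auto simp: bool_words_def)
  have A: "adjacent_occs True p \<subseteq> {..<j - 1}" and B: "adjacent_occs False p \<subseteq> {..<k - 1}"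
    using adjacent_occs_subset[of True p] adjacent_occs_subset[of False p] counts by simp_all
  show "f (des_weight j D E (rev p)) =
      f (des_weight j ((\<lambda>i. j - 2 - i) ` D) ((\<lambda>i. k - 2 - i) ` E) p)"
    unfolding des_weight_def adjacent_occs_rev counts
    using card_Int_image_involution[OF reflect_involution D A]
      card_Int_image_involution[OF reflect_involution E B]
      card_image[OF inj_on_subset[OF inj_on_reflect A]]
    by simp
qed (auto simp: bool_words_def last_rev hd_rev)

lemma length_perms: "\<mu> \<in> perms n \<Longrightarrow> length \<mu> = n"
  unfolding perms_def by (metis (mono_tags) card_atLeastAtMost diff_Suc_1 distinct_card mem_Collect_eq)

definition position :: "'a list \<Rightarrow> 'a \<Rightarrow> nat" where
  "position w v = (LEAST i. i < length w \<and> w ! i = v)"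

lemma position_nth: "distinct w \<Longrightarrow> i < length w \<Longrightarrow> position w (w ! i) = i"
  unfolding position_def by (rule Least_equality) (auto simp: nth_eq_iff_index_eq)

lemma position_less_length_nth:
  "v \<in> set w \<Longrightarrow> position w v < length w \<and> w ! position w v = v"
  unfolding position_def by (rule LeastI_ex) (auto simp: in_set_conv_nth)

lemma length_perm_inv [simp]: "length (perm_inv w) = length w"
  by (simp add: perm_inv_def del: upt_Suc)

lemma nth_perm_inv: "i < length w \<Longrightarrow> perm_inv w ! i = Suc (position w (Suc i))"
  by (simp add: perm_inv_def position_def del: upt_Suc)

lemma perm_inv_nth_perm:
  assumes "\<sigma> \<in> perms j" "q < j"
  shows "perm_inv \<sigma> ! (\<sigma> ! q - 1) = Suc q"
proof -
  have "length \<sigma> = j" "distinct \<sigma>"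
    using assms(1) by (simp_all add: length_perms perms_def)
  moreover have "\<sigma> ! q \<in> {1..j}"
    using assms \<open>length \<sigma> = j\<close> by (auto simp: perms_def)
  then have "\<sigma> ! q - 1 < j" "Suc (\<sigma> ! q - 1) = \<sigma> ! q" by auto
  ultimately show ?thesis
    using assms(2) nth_perm_inv[of "\<sigma> ! q - 1" \<sigma>] position_nth[of \<sigma> q] by simp
qed

lemma set_perm_inv_subset: "\<sigma> \<in> perms j \<Longrightarrow> set (perm_inv \<sigma>) \<subseteq> {1..j}"
proof
  fix x
  assume "\<sigma> \<in> perms j" "x \<in> set (perm_inv \<sigma>)"
  then obtain i where i: "i < j" "x = perm_inv \<sigma> ! i"
    by (auto simp: in_set_conv_nth length_perms)
  then have "Suc i \<in> set \<sigma>"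
    using \<open>\<sigma> \<in> perms j\<close> by (auto simp: perms_def)
  then have "position \<sigma> (Suc i) < j"
    using position_less_length_nth length_perms[OF \<open>\<sigma> \<in> perms j\<close>] by metis
  then show "x \<in> {1..j}"
    using i nth_perm_inv length_perms[OF \<open>\<sigma> \<in> perms j\<close>] by simp
qed

lemma inj_on_perm_inv: "inj_on perm_inv (perms n)"
proof (rule inj_onI)
  fix \<mu>1 \<mu>2
  assume perms: "\<mu>1 \<in> perms n" "\<mu>2 \<in> perms n" and eq: "perm_inv \<mu>1 = perm_inv \<mu>2"
  show "\<mu>1 = \<mu>2"
  proof (rule nth_equalityI)
    show "length \<mu>1 = length \<mu>2" using perms by (simp add: length_perms)
    fix q
    assume "q < length \<mu>1"
    then have "perm_inv \<mu>1 ! (\<mu>1 ! q - 1) = Suc q"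
      using perm_inv_nth_perm[OF perms(1)] length_perms[OF perms(1)] by simp
    moreover have "\<mu>1 ! q \<in> set \<mu>2" "\<mu>1 ! q \<in> {1..n}"
      using \<open>q < length \<mu>1\<close> perms nth_mem[of q \<mu>1] by (auto simp: perms_def)
    moreover have "\<mu>1 ! q - 1 < length \<mu>2" "Suc (\<mu>1 ! q - 1) = \<mu>1 ! q"
      using \<open>\<mu>1 ! q \<in> {1..n}\<close> length_perms[OF perms(2)] by auto
    ultimately have "position \<mu>2 (\<mu>1 ! q) = q"
      using eq nth_perm_inv[of "\<mu>1 ! q - 1" \<mu>2] by simp
    then show "\<mu>1 ! q = \<mu>2 ! q"
      using position_less_length_nth[OF \<open>\<mu>1 ! q \<in> set \<mu>2\<close>] by simp
  qed
qed

lemma card_less_nth_red_eq: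
  assumes "red_eq s' \<sigma>" "\<sigma> \<in> perms j" "q < j"
  shows "card {a \<in> set s'. a < s' ! q} = \<sigma> ! q - 1"
proof -
  have lengths: "length \<sigma> = j" "length s' = j"
    using assms length_perms by (auto simp: red_eq_def)
  have "distinct s'" "distinct \<sigma>" "set \<sigma> = {1..j}"
    using assms by (auto simp: red_eq_def perms_def)
  let ?I = "{i. i < j \<and> \<sigma> ! i < \<sigma> ! q}"
  have "{a \<in> set s'. a < s' ! q} = (!) s' ` ?I"
    using assms lengths by (auto simp: red_eq_def in_set_conv_nth)
  moreover have "{a \<in> set \<sigma>. a < \<sigma> ! q} = (!) \<sigma> ` ?I"
    using lengths by (auto simp: in_set_conv_nth)
  moreover have "inj_on ((!) s') ?I" "inj_on ((!) \<sigma>) ?I"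
    using \<open>distinct s'\<close> \<open>distinct \<sigma>\<close> lengths by (auto simp: inj_on_def nth_eq_iff_index_eq)
  moreover have "{a \<in> set \<sigma>. a < \<sigma> ! q} = {1..<\<sigma> ! q}"
    using \<open>set \<sigma> = {1..j}\<close> nth_mem[of q \<sigma>] assms(3) lengths by auto
  ultimately have "card {a \<in> set s'. a < s' ! q} = card {a \<in> set \<sigma>. a < \<sigma> ! q}"
    by (simp add: card_image)
  also have "\<dots> = \<sigma> ! q - 1"
    using \<open>{a \<in> set \<sigma>. a < \<sigma> ! q} = {1..<\<sigma> ! q}\<close> by simp
  finally show ?thesis .
qed

lemma card_less_Suc_Suc:
  assumes "X \<subseteq> {2..}"
  shows "card {i'. i' < i \<and> Suc (Suc i') \<in> X} = card {a \<in> X. a < Suc (Suc i)}"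
proof -
  have "{a \<in> X. a < Suc (Suc i)} = (\<lambda>i'. Suc (Suc i')) ` {i'. i' < i \<and> Suc (Suc i') \<in> X}"
  proof
    show "{a \<in> X. a < Suc (Suc i)} \<subseteq> (\<lambda>i'. Suc (Suc i')) ` {i'. i' < i \<and> Suc (Suc i') \<in> X}"
    proof
      fix a
      assume a: "a \<in> {a \<in> X. a < Suc (Suc i)}"
      then have "a = Suc (Suc (a - 2))" using assms by auto
      then show "a \<in> (\<lambda>i'. Suc (Suc i')) ` {i'. i' < i \<and> Suc (Suc i') \<in> X}"
        using a by (metis (mono_tags, lifting) Suc_less_SucD image_eqI mem_Collect_eq)
    qed
  qed auto
  then show ?thesis by (simp add: card_image inj_on_def)
qed

lemma count_list_take:
  assumes "i \<le> length p"
  shows "count_list (take i p) c = card {i'. i' < i \<and> p ! i' = c}"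
proof -
  have "count_list (take i p) c = card {i'. i' < i \<and> c = take i p ! i'}"
    using assms by (simp add: count_list_eq_length_filter length_filter_conv_card min_def)
  also have "{i'. i' < i \<and> c = take i p ! i'} = {i'. i' < i \<and> p ! i' = c}"
    by auto
  finally show ?thesis .
qed

definition left_pattern :: "nat \<Rightarrow> nat \<Rightarrow> nat list \<Rightarrow> bool list" where
  "left_pattern j k \<mu> = map (\<lambda>i. Suc (Suc i) \<in> set (take j \<mu>)) [0..<j + k]"

lemma length_left_pattern [simp]: "length (left_pattern j k \<mu>) = j + k"
  by (simp add: left_pattern_def)

context
  fixes \<sigma> \<tau> :: "nat list" and j k :: nat and \<mu> s' t' :: "nat list"
  assumes \<sigma>: "\<sigma> \<in> perms j" and \<tau>: "\<tau> \<in> perms k"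
    and \<mu>: "\<mu> = s' @ [1] @ t'" "red_eq s' \<sigma>" "red_eq t' \<tau>" "\<mu> \<in> perms (j + k + 1)"
begin

lemma split_lengths: "length s' = j" "length t' = k" "length \<mu> = j + k + 1"
  using \<mu> length_perms[OF \<sigma>] length_perms[OF \<tau>] by (auto simp: red_eq_def)

lemma split_sets:
  "set s' \<inter> set t' = {}" "set s' \<union> set t' = {2..j + k + 1}"
  "set s' \<subseteq> {2..j + k + 1}" "set t' \<subseteq> {2..j + k + 1}"
proof -
  have "distinct (s' @ [1] @ t')" "set (s' @ [1] @ t') = {1..j + k + 1}"
    using \<mu> by (simp_all add: perms_def)
  moreover have "{1..j + k + 1} - {1} = {2..j + k + 1}" by auto
  ultimately show "set s' \<inter> set t' = {}" "set s' \<union> set t' = {2..j + k + 1}"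
    by auto
  then show "set s' \<subseteq> {2..j + k + 1}" "set t' \<subseteq> {2..j + k + 1}"
    by blast+
qed

lemma position_split:
  "position \<mu> 1 = j" "q < j \<Longrightarrow> position \<mu> (s' ! q) = q" "q < k \<Longrightarrow> position \<mu> (t' ! q) = Suc j + q"
proof -
  have "distinct \<mu>" using \<mu>(4) by (simp add: perms_def)
  note position = position_nth[OF this]
  show "position \<mu> 1 = j"
    using position[of j] \<mu>(1) split_lengths by (simp add: nth_append)
  show "q < j \<Longrightarrow> position \<mu> (s' ! q) = q"
    using position[of q] \<mu>(1) split_lengths by (simp add: nth_append)
  show "q < k \<Longrightarrow> position \<mu> (t' ! q) = Suc j + q"
    using position[of "Suc j + q"] \<mu>(1) split_lengths by (simp add: nth_append)
qed

lemma nth_left_pattern: "i < j + k \<Longrightarrow> left_pattern j k \<mu> ! i \<longleftrightarrow> Suc (Suc i) \<in> set s'"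
  using \<mu>(1) split_lengths by (simp add: left_pattern_def)

lemma not_nth_left_pattern: "i < j + k \<Longrightarrow> \<not> left_pattern j k \<mu> ! i \<longleftrightarrow> Suc (Suc i) \<in> set t'"
  using nth_left_pattern split_sets(1,2) by auto

lemma count_list_take_left_pattern:
  assumes "i \<le> j + k"
  shows "count_list (take i (left_pattern j k \<mu>)) True = card {a \<in> set s'. a < Suc (Suc i)}"
    and "count_list (take i (left_pattern j k \<mu>)) False = card {a \<in> set t'. a < Suc (Suc i)}"
proof -
  have "{i'. i' < i \<and> left_pattern j k \<mu> ! i' = True} = {i'. i' < i \<and> Suc (Suc i') \<in> set s'}"
    "{i'. i' < i \<and> left_pattern j k \<mu> ! i' = False} = {i'. i' < i \<and> Suc (Suc i') \<in> set t'}"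
    using assms nth_left_pattern not_nth_left_pattern split_sets(1) by auto
  moreover have "set s' \<subseteq> {2..}" "set t' \<subseteq> {2..}"
    using split_sets(3,4) by auto
  ultimately show "count_list (take i (left_pattern j k \<mu>)) True = card {a \<in> set s'. a < Suc (Suc i)}"
    and "count_list (take i (left_pattern j k \<mu>)) False = card {a \<in> set t'. a < Suc (Suc i)}"
    using assms count_list_take[of i "left_pattern j k \<mu>"] card_less_Suc_Suc
    by simp_all
qed

lemma count_list_left_pattern:
  "count_list (left_pattern j k \<mu>) True = j" "count_list (left_pattern j k \<mu>) False = k"
proof -
  have "{a \<in> set s'. a < Suc (Suc (j + k))} = set s'" "{a \<in> set t'. a < Suc (Suc (j + k))} = set t'"
    using split_sets(3,4) by auto
  moreover have "card (set s') = j" "card (set t') = k"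
    using \<mu> split_lengths by (simp_all add: red_eq_def distinct_card)
  ultimately show "count_list (left_pattern j k \<mu>) True = j" "count_list (left_pattern j k \<mu>) False = k"
    using count_list_take_left_pattern[of "j + k"] by simp_all
qed

lemma nth_Suc_perm_inv_split:
  assumes i: "i < j + k"
  shows "perm_inv \<mu> ! Suc i =
    (if left_pattern j k \<mu> ! i then perm_inv \<sigma> ! count_list (take i (left_pattern j k \<mu>)) True
     else map ((+) (Suc j)) (perm_inv \<tau>) ! count_list (take i (left_pattern j k \<mu>)) False)"
proof (cases "left_pattern j k \<mu> ! i")
  case True
  then have "Suc (Suc i) \<in> set s'" using nth_left_pattern[OF i] by simp
  then obtain q where q: "q < j" "s' ! q = Suc (Suc i)"
    using split_lengths by (auto simp: in_set_conv_nth)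
  have "count_list (take i (left_pattern j k \<mu>)) True = \<sigma> ! q - 1"
    using count_list_take_left_pattern(1)[of i] i card_less_nth_red_eq[OF \<mu>(2) \<sigma> q(1)] q(2) by simp
  moreover have "perm_inv \<mu> ! Suc i = Suc q"
    using nth_perm_inv[of "Suc i" \<mu>] i split_lengths position_split(2)[OF q(1)] q(2) by simp
  ultimately show ?thesis
    using True perm_inv_nth_perm[OF \<sigma> q(1)] by simp
next
  case False
  then have "Suc (Suc i) \<in> set t'" using not_nth_left_pattern[OF i] by simp
  then obtain q where q: "q < k" "t' ! q = Suc (Suc i)"
    using split_lengths by (auto simp: in_set_conv_nth)
  have "count_list (take i (left_pattern j k \<mu>)) False = \<tau> ! q - 1"
    using count_list_take_left_pattern(2)[of i] i card_less_nth_red_eq[OF \<mu>(3) \<tau> q(1)] q(2) by simp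
  moreover have "\<tau> ! q - 1 < length (perm_inv \<tau>)"
    using \<tau> q(1) nth_mem[of q \<tau>] length_perms[OF \<tau>] by (auto simp: perms_def)
  moreover have "perm_inv \<mu> ! Suc i = Suc (Suc j + q)"
    using nth_perm_inv[of "Suc i" \<mu>] i split_lengths position_split(3)[OF q(1)] q(2) by simp
  ultimately show ?thesis
    using False perm_inv_nth_perm[OF \<tau> q(1)] by simp
qed

lemma perm_inv_split:
  "perm_inv \<mu> = Suc j # interleave (left_pattern j k \<mu>) (perm_inv \<sigma>) (map ((+) (Suc j)) (perm_inv \<tau>))"
proof (rule nth_equalityI)
  let ?p = "left_pattern j k \<mu>"
  have lengths: "length (perm_inv \<sigma>) = count_list ?p True"
    "length (map ((+) (Suc j)) (perm_inv \<tau>)) = count_list ?p False"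
    using count_list_left_pattern length_perms[OF \<sigma>] length_perms[OF \<tau>] by simp_all
  show "length (perm_inv \<mu>) = length (Suc j # interleave ?p (perm_inv \<sigma>) (map ((+) (Suc j)) (perm_inv \<tau>)))"
    using split_lengths by simp
  fix x
  assume "x < length (perm_inv \<mu>)"
  then show "perm_inv \<mu> ! x = (Suc j # interleave ?p (perm_inv \<sigma>) (map ((+) (Suc j)) (perm_inv \<tau>))) ! x"
  proof (cases x)
    case 0
    then show ?thesis using nth_perm_inv[of 0 \<mu>] split_lengths position_split(1) by simp
  next
    case (Suc i)
    then have "i < j + k"
      using \<open>x < length (perm_inv \<mu>)\<close> split_lengths by simp
    then show ?thesis
      using Suc nth_interleave[OF lengths, of i] nth_Suc_perm_inv_split[of i] by simp
  qed
qed

lemma ides_split: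
  "ides \<mu> = des_weight j (descents (perm_inv \<sigma>)) (descents (perm_inv \<tau>)) (left_pattern j k \<mu>)"
proof -
  let ?p = "left_pattern j k \<mu>"
  let ?u = "perm_inv \<sigma>" and ?w = "map ((+) (Suc j)) (perm_inv \<tau>)"
  have lengths: "length ?u = count_list ?p True" "length ?w = count_list ?p False"
    using count_list_left_pattern length_perms[OF \<sigma>] length_perms[OF \<tau>] by simp_all
  have below: "\<forall>x\<in>set ?u. x < Suc j" and above: "\<forall>y\<in>set ?w. Suc j < y"
    using set_perm_inv_subset[OF \<sigma>] set_perm_inv_subset[OF \<tau>] by auto
  have "(?p \<noteq> [] \<and> (hd ?p \<or> hd ?w < Suc j)) = (?p \<noteq> [] \<and> hd ?p)"
  proof (cases "?p \<noteq> [] \<and> \<not> hd ?p")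
    case True
    then have "?w \<noteq> []" using lengths count_list_hd_pos[of ?p] by (auto simp flip: length_0_conv)
    then have "Suc j < hd ?w" using above hd_in_set by blast
    then show ?thesis using True by auto
  qed auto
  then have "ides \<mu> = (if ?p \<noteq> [] \<and> hd ?p then 1 else 0) + card (descents (interleave ?p ?u ?w))"
    unfolding ides_def des_eq_card_descents perm_inv_split
    by (simp add: descents_Cons_interleave_above[OF lengths below] card_insert_zero_Suc_image)
  also have "\<dots> = (if ?p \<noteq> [] \<and> hd ?p then 1 else 0) + rises ?p +
      card (descents ?u \<inter> adjacent_occs True ?p) + card (descents (perm_inv \<tau>) \<inter> adjacent_occs False ?p)"
    using card_descents_interleave[OF lengths] below above descents_map_add by fastforce
  finally show ?thesis
    using count_True_eq_rises_adjacent_occs[of ?p] count_list_left_pattern by (simp add: des_weight_def)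
qed

lemma last_left_pattern_iff: "j + k + 1 \<in> set t' \<longleftrightarrow> left_pattern j k \<mu> \<noteq> [] \<and> \<not> last (left_pattern j k \<mu>)"
proof (cases "j + k = 0")
  case True
  then show ?thesis using split_lengths by (simp add: left_pattern_def)
next
  case False
  then have "last (left_pattern j k \<mu>) = left_pattern j k \<mu> ! (j + k - 1)"
    by (simp add: last_conv_nth flip: length_0_conv)
  then show ?thesis using not_nth_left_pattern[of "j + k - 1"] False by (simp flip: length_0_conv)
qed

lemma hd_left_pattern_iff: "2 \<in> set t' \<longleftrightarrow> left_pattern j k \<mu> \<noteq> [] \<and> \<not> hd (left_pattern j k \<mu>)"
proof (cases "j + k = 0")
  case True
  then show ?thesis using split_lengths by (simp add: left_pattern_def)
next
  case False
  then have "hd (left_pattern j k \<mu>) = left_pattern j k \<mu> ! 0"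
    by (simp add: hd_conv_nth flip: length_0_conv)
  then show ?thesis using not_nth_left_pattern[of 0] False by (simp add: numeral_2_eq_2 flip: length_0_conv)
qed

end

lemma strict_sorted_nth_less_iff:
  fixes l :: "'a::linorder list"
  assumes "sorted_wrt (<) l" "a < length l" "b < length l"
  shows "l ! a < l ! b \<longleftrightarrow> a < b"
proof (cases a b rule: linorder_cases)
  case less
  then show ?thesis using sorted_wrt_nth_less[OF assms(1) less assms(3)] by simp
next
  case greater
  then show ?thesis using sorted_wrt_nth_less[OF assms(1) greater assms(2)] by simp
qed simp

lemma exists_red_eq_with_set:
  assumes "\<sigma> \<in> perms m" "finite X" "card X = m"
  obtains s' where "red_eq s' \<sigma>" "set s' = X"
proof -
  obtain l where l: "sorted_wrt (<) l" "set l = X" "length l = m"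
    using finite_set_strict_sorted[OF assms(2)] assms(3) by blast
  have \<sigma>: "length \<sigma> = m" "distinct \<sigma>" "set \<sigma> = {1..m}"
    using assms(1) by (simp_all add: length_perms perms_def)
  define s' where "s' = map (\<lambda>x. l ! (x - 1)) \<sigma>"
  have order: "s' ! a < s' ! b \<longleftrightarrow> \<sigma> ! a < \<sigma> ! b" if "a < m" "b < m" for a b
  proof -
    have "\<sigma> ! a \<in> {1..m}" "\<sigma> ! b \<in> {1..m}"
      using that \<sigma> nth_mem by blast+
    then have "\<sigma> ! a - 1 < length l" "\<sigma> ! b - 1 < length l"
      using l(3) by auto
    from strict_sorted_nth_less_iff[OF l(1) this] show ?thesis
      using that \<sigma>(1) \<open>\<sigma> ! a \<in> {1..m}\<close> \<open>\<sigma> ! b \<in> {1..m}\<close> by (auto simp: s'_def)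
  qed
  have "distinct s'"
  proof (subst distinct_conv_nth, intro allI impI)
    fix a b
    assume "a < length s'" "b < length s'" "a \<noteq> b"
    then have "\<sigma> ! a \<noteq> \<sigma> ! b" using \<sigma> by (simp add: s'_def nth_eq_iff_index_eq)
    then show "s' ! a \<noteq> s' ! b"
      using order \<open>a < length s'\<close> \<open>b < length s'\<close> \<sigma>(1)
      by (metis length_map linorder_neq_iff order_less_irrefl s'_def)
  qed
  moreover have "set s' = X"
  proof -
    have "set s' = (\<lambda>x. l ! (x - 1)) ` {1..m}" using \<sigma> by (simp add: s'_def)
    also have "\<dots> = (!) l ` {..<m}"
    proof
      show "(\<lambda>x. l ! (x - 1)) ` {1..m} \<subseteq> (!) l ` {..<m}" by auto
      show "(!) l ` {..<m} \<subseteq> (\<lambda>x. l ! (x - 1)) ` {1..m}"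
      proof
        fix y
        assume "y \<in> (!) l ` {..<m}"
        then obtain i where "i < m" "y = l ! i" by auto
        then show "y \<in> (\<lambda>x. l ! (x - 1)) ` {1..m}" by (intro image_eqI[where x = "Suc i"]) auto
      qed
    qed
    also have "\<dots> = X" using l by (auto simp: in_set_conv_nth)
    finally show ?thesis .
  qed
  moreover have "length s' = length \<sigma>" by (simp add: s'_def)
  ultimately have "red_eq s' \<sigma>"
    using order \<sigma>(1) by (simp add: red_eq_def)
  then show ?thesis using \<open>set s' = X\<close> by (rule that)
qed

lemma count_list_True_add_False: "count_list p True + count_list p False = length p"
  by (induction p) auto

lemma image_Suc_Suc_lessThan: "(\<lambda>i. Suc (Suc i)) ` {..<n} = {2..n + 1}"
proof
  show "{2..n + 1} \<subseteq> (\<lambda>i. Suc (Suc i)) ` {..<n}"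
  proof
    fix x
    assume "x \<in> {2..n + 1}"
    then show "x \<in> (\<lambda>i. Suc (Suc i)) ` {..<n}" by (intro image_eqI[where x = "x - 2"]) auto
  qed
qed auto

lemma exists_split_with_left_pattern:
  assumes \<sigma>: "\<sigma> \<in> perms j" and \<tau>: "\<tau> \<in> perms k" and p: "p \<in> bool_words j k"
  obtains s' t' where "red_eq s' \<sigma>" "red_eq t' \<tau>" "s' @ [1] @ t' \<in> perms (j + k + 1)"
    "left_pattern j k (s' @ [1] @ t') = p"
proof -
  have counts: "count_list p True = j" "count_list p False = k"
    using p by (simp_all add: bool_words_def)
  then have "length p = j + k"
    using count_list_True_add_False[of p] by simp
  define A where "A = (\<lambda>i. Suc (Suc i)) ` {i. i < j + k \<and> p ! i}"
  define B where "B = (\<lambda>i. Suc (Suc i)) ` {i. i < j + k \<and> \<not> p ! i}"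
  have "card A = j" "card B = k"
    using count_list_take[of "length p" p] counts \<open>length p = j + k\<close>
    by (simp_all add: A_def B_def card_image inj_on_def)
  moreover have "finite A" "finite B"
    by (simp_all add: A_def B_def)
  ultimately obtain s' t' where s': "red_eq s' \<sigma>" "set s' = A" and t': "red_eq t' \<tau>" "set t' = B"
    by (metis exists_red_eq_with_set[OF \<sigma>] exists_red_eq_with_set[OF \<tau>])
  have "distinct s'" "distinct t'"
    using s' t' by (simp_all add: red_eq_def)
  moreover have "A \<inter> B = {}" "1 \<notin> A \<union> B"
    unfolding A_def B_def by auto
  moreover have "A \<union> B = (\<lambda>i. Suc (Suc i)) ` {..<j + k}"
    unfolding A_def B_def by auto
  then have "insert 1 (A \<union> B) = {1..j + k + 1}"
    by (auto simp: image_Suc_Suc_lessThan)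
  ultimately have "s' @ [1] @ t' \<in> perms (j + k + 1)"
    unfolding perms_def using s'(2) t'(2) by (auto simp flip: \<open>insert 1 (A \<union> B) = {1..j + k + 1}\<close>)
  moreover have "left_pattern j k (s' @ [1] @ t') = p"
  proof (rule nth_equalityI)
    show "length (left_pattern j k (s' @ [1] @ t')) = length p"
      using \<open>length p = j + k\<close> by simp
    fix i
    assume "i < length (left_pattern j k (s' @ [1] @ t'))"
    then have "i < j + k" by simp
    moreover have "length s' = j" using s'(1) length_perms[OF \<sigma>] by (simp add: red_eq_def)
    ultimately show "left_pattern j k (s' @ [1] @ t') ! i = p ! i"
      using s'(2) by (auto simp: left_pattern_def A_def)
  qed
  ultimately show ?thesis using s'(1) t'(1) that by blast
qed

lemma inj_on_left_pattern:
  assumes \<sigma>: "\<sigma> \<in> perms j" and \<tau>: "\<tau> \<in> perms k"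
  shows "inj_on (left_pattern j k)
    {\<mu> \<in> perms (j + k + 1). \<exists>s' t'. \<mu> = s' @ [1] @ t' \<and> red_eq s' \<sigma> \<and> red_eq t' \<tau>}"
proof (rule inj_onI)
  fix \<mu>1 \<mu>2
  assume "\<mu>1 \<in> {\<mu> \<in> perms (j + k + 1). \<exists>s' t'. \<mu> = s' @ [1] @ t' \<and> red_eq s' \<sigma> \<and> red_eq t' \<tau>}"
    and "\<mu>2 \<in> {\<mu> \<in> perms (j + k + 1). \<exists>s' t'. \<mu> = s' @ [1] @ t' \<and> red_eq s' \<sigma> \<and> red_eq t' \<tau>}"
    and eq: "left_pattern j k \<mu>1 = left_pattern j k \<mu>2"
  then obtain s1 t1 s2 t2 where
    1: "\<mu>1 = s1 @ [1] @ t1" "red_eq s1 \<sigma>" "red_eq t1 \<tau>" "\<mu>1 \<in> perms (j + k + 1)" and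
    2: "\<mu>2 = s2 @ [1] @ t2" "red_eq s2 \<sigma>" "red_eq t2 \<tau>" "\<mu>2 \<in> perms (j + k + 1)"
    by blast
  have "perm_inv \<mu>1 = perm_inv \<mu>2"
    using perm_inv_split[OF \<sigma> \<tau> 1] perm_inv_split[OF \<sigma> \<tau> 2] eq by simp
  then show "\<mu>1 = \<mu>2"
    by (rule inj_onD[OF inj_on_perm_inv _ 1(4) 2(4)])
qed

context
  fixes \<sigma> \<tau> :: "nat list" and j k :: nat and R :: "nat list \<Rightarrow> bool" and Q :: "bool list \<Rightarrow> bool"
  assumes \<sigma>: "\<sigma> \<in> perms j" and \<tau>: "\<tau> \<in> perms k"
    and R_Q: "\<And>\<mu> s' t'. \<mu> = s' @ [1] @ t' \<Longrightarrow> red_eq s' \<sigma> \<Longrightarrow> red_eq t' \<tau> \<Longrightarrow>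
      \<mu> \<in> perms (j + k + 1) \<Longrightarrow> R t' \<longleftrightarrow> Q (left_pattern j k \<mu>)"
begin

lemma bij_betw_left_pattern:
  "bij_betw (left_pattern j k)
     {\<mu> \<in> perms (j + k + 1). \<exists>s' t'. \<mu> = s' @ [1] @ t' \<and> red_eq s' \<sigma> \<and> red_eq t' \<tau> \<and> R t'}
     {p \<in> bool_words j k. Q p}"
    (is "bij_betw _ ?M _")
proof (rule bij_betw_imageI)
  show "inj_on (left_pattern j k) ?M"
    by (rule inj_on_subset[OF inj_on_left_pattern[OF \<sigma> \<tau>]]) blast
  show "left_pattern j k ` ?M = {p \<in> bool_words j k. Q p}"
  proof
    show "left_pattern j k ` ?M \<subseteq> {p \<in> bool_words j k. Q p}"
    proof
      fix p
      assume "p \<in> left_pattern j k ` ?M"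
      then obtain \<mu> s' t' where \<mu>: "\<mu> = s' @ [1] @ t'" "red_eq s' \<sigma>" "red_eq t' \<tau>" "\<mu> \<in> perms (j + k + 1)"
        and "R t'" "p = left_pattern j k \<mu>"
        by blast
      then show "p \<in> {p \<in> bool_words j k. Q p}"
        using count_list_left_pattern[OF \<sigma> \<tau> \<mu>] R_Q[OF \<mu>] by (simp add: bool_words_def)
    qed
    show "{p \<in> bool_words j k. Q p} \<subseteq> left_pattern j k ` ?M"
    proof
      fix p
      assume p: "p \<in> {p \<in> bool_words j k. Q p}"
      then obtain s' t' where st: "red_eq s' \<sigma>" "red_eq t' \<tau>" "s' @ [1] @ t' \<in> perms (j + k + 1)"
          and "left_pattern j k (s' @ [1] @ t') = p"
        using exists_split_with_left_pattern[OF \<sigma> \<tau>] by blast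
      moreover from this have "R t'"
        using R_Q[OF refl st] p by simp
      ultimately have "s' @ [1] @ t' \<in> ?M"
        by blast
      with \<open>left_pattern j k (s' @ [1] @ t') = p\<close>[symmetric] show "p \<in> left_pattern j k ` ?M"
        by (rule image_eqI)
    qed
  qed
qed

lemma sum_ides_eq_sum_des_weight:
  "(\<Sum>\<mu>\<in>{\<mu> \<in> perms (j + k + 1). \<exists>s' t'. \<mu> = s' @ [1] @ t' \<and> red_eq s' \<sigma> \<and> red_eq t' \<tau> \<and> R t'}.
      f (ides \<mu>)) =
   (\<Sum>p\<in>{p \<in> bool_words j k. Q p}. f (des_weight j (descents (perm_inv \<sigma>)) (descents (perm_inv \<tau>)) p))"
    (is "(\<Sum>\<mu>\<in>?M. _) = (\<Sum>p\<in>_. f (des_weight j ?D ?E p))")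
proof -
  have "(\<Sum>\<mu>\<in>?M. f (ides \<mu>)) = (\<Sum>\<mu>\<in>?M. f (des_weight j ?D ?E (left_pattern j k \<mu>)))"
  proof (rule sum.cong)
    fix \<mu>
    assume "\<mu> \<in> ?M"
    then obtain s' t' where "\<mu> = s' @ [1] @ t'" "red_eq s' \<sigma>" "red_eq t' \<tau>" "\<mu> \<in> perms (j + k + 1)"
      by blast
    then show "f (ides \<mu>) = f (des_weight j ?D ?E (left_pattern j k \<mu>))"
      using ides_split[OF \<sigma> \<tau>] by simp
  qed simp
  also have "\<dots> = (\<Sum>p\<in>{p \<in> bool_words j k. Q p}. f (des_weight j ?D ?E p))"
    by (rule sum.reindex_bij_betw[OF bij_betw_left_pattern])
  finally show ?thesis .
qed

end

lemma descents_subset: "descents w \<subseteq> {..<length w - 1}"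
  by (auto simp: descents_def)

lemma sum_tri_up:
  assumes "\<sigma> \<in> perms j" "\<tau> \<in> perms k"
  shows "(\<Sum>\<mu>\<in>tri_up \<sigma> \<tau>. f (ides \<mu>)) =
    (\<Sum>p\<in>{p \<in> bool_words j k. p \<noteq> [] \<and> \<not> last p}.
       f (des_weight j (descents (perm_inv \<sigma>)) (descents (perm_inv \<tau>)) p))"
  unfolding tri_up_def length_perms[OF assms(1)] length_perms[OF assms(2)]
  by (rule sum_ides_eq_sum_des_weight[where R = "\<lambda>t'. j + k + 1 \<in> set t'" and Q = "\<lambda>p. p \<noteq> [] \<and> \<not> last p",
        OF assms last_left_pattern_iff[OF assms]])

lemma sum_tri_down:
  assumes "\<sigma> \<in> perms j" "\<tau> \<in> perms k"
  shows "(\<Sum>\<mu>\<in>tri_down \<sigma> \<tau>. f (ides \<mu>)) =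
    (\<Sum>p\<in>{p \<in> bool_words j k. p \<noteq> [] \<and> \<not> hd p}.
       f (des_weight j (descents (perm_inv \<sigma>)) (descents (perm_inv \<tau>)) p))"
  unfolding tri_down_def length_perms[OF assms(1)] length_perms[OF assms(2)]
  by (rule sum_ides_eq_sum_des_weight[where R = "\<lambda>t'. 2 \<in> set t'" and Q = "\<lambda>p. p \<noteq> [] \<and> \<not> hd p",
        OF assms hd_left_pattern_iff[OF assms]])

lemma sum_ends_False_eq_sum_starts_False:
  assumes "D \<subseteq> {..<j - 1}" "D' \<subseteq> {..<j - 1}" "card D = card D'"
    and "E \<subseteq> {..<k - 1}" "E' \<subseteq> {..<k - 1}" "card E = card E'"
  shows "(\<Sum>p\<in>{p \<in> bool_words j k. p \<noteq> [] \<and> \<not> last p}. f (des_weight j D E p)) =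
         (\<Sum>p\<in>{p \<in> bool_words j k. p \<noteq> [] \<and> \<not> hd p}. f (des_weight j D' E' p))"
proof -
  have reflected: "(\<lambda>i. j - 2 - i) ` D \<subseteq> {..<j - 1}" "(\<lambda>i. k - 2 - i) ` E \<subseteq> {..<k - 1}"
    using assms(1,4) by auto
  have cards: "card ((\<lambda>i. j - 2 - i) ` D) = card D'" "card ((\<lambda>i. k - 2 - i) ` E) = card E'"
    using card_image[OF inj_on_subset[OF inj_on_reflect assms(1)]]
      card_image[OF inj_on_subset[OF inj_on_reflect assms(4)]] assms(3,6) by simp_all
  have "(\<Sum>p\<in>{p \<in> bool_words j k. p \<noteq> [] \<and> \<not> hd p}.
        f (des_weight j ((\<lambda>i. j - 2 - i) ` D) ((\<lambda>i. k - 2 - i) ` E) p)) =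
      (\<Sum>p\<in>{p \<in> bool_words j k. p \<noteq> [] \<and> \<not> hd p}. f (des_weight j D' E' p))"
    by (rule sum_starts_False_card_eq[OF reflected(1) assms(2) cards(1) reflected(2) assms(5) cards(2)])
  then show ?thesis
    by (simp only: sum_starts_False_reflect_eq_ends_False[OF assms(1,4)])
qed

lemma descents_perm_inv_subset: "\<sigma> \<in> perms j \<Longrightarrow> descents (perm_inv \<sigma>) \<subseteq> {..<j - 1}"
  using descents_subset[of "perm_inv \<sigma>"] by (simp add: length_perms)

theorem corollary3p1:
  fixes \<sigma> \<sigma>h \<tau> \<tau>h :: "nat list" and j k :: nat
  assumes "\<sigma> \<in> perms j" and "\<sigma>h \<in> perms j" and "ides \<sigma> = ides \<sigma>h"
    and "\<tau> \<in> perms k" and "\<tau>h \<in> perms k" and "ides \<tau> = ides \<tau>h"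
  shows "(\<Sum>\<mu>\<in>tri_up \<sigma> \<tau>. [:0, 1:] ^ ides \<mu>) =
         (\<Sum>\<mu>\<in>tri_down \<sigma>h \<tau>h. [:0, 1:] ^ ides \<mu> :: int poly)"
proof -
  let ?t = "[:0, 1:] :: int poly"
  have "(\<Sum>\<mu>\<in>tri_up \<sigma> \<tau>. ?t ^ ides \<mu>) = (\<Sum>p\<in>{p \<in> bool_words j k. p \<noteq> [] \<and> \<not> last p}.
      ?t ^ des_weight j (descents (perm_inv \<sigma>)) (descents (perm_inv \<tau>)) p)"
    by (rule sum_tri_up[OF assms(1,4)])
  also have "\<dots> = (\<Sum>p\<in>{p \<in> bool_words j k. p \<noteq> [] \<and> \<not> hd p}.
      ?t ^ des_weight j (descents (perm_inv \<sigma>h)) (descents (perm_inv \<tau>h)) p)"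
    using assms(3,6) descents_perm_inv_subset assms(1,2,4,5)
    by (intro sum_ends_False_eq_sum_starts_False) (simp_all add: ides_def des_eq_card_descents)
  also have "\<dots> = (\<Sum>\<mu>\<in>tri_down \<sigma>h \<tau>h. ?t ^ ides \<mu>)"
    by (rule sum_tri_down[OF assms(2,5), symmetric])
  finally show ?thesis .
qed

end
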